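(* The following two assertions are equivalent. (i) (Gleason's theorem for $\mathbb{R}^3$.) For every state $P$ on $\mathbb{R}^3$ there is a symmetric positive semidefinite real $3\times 3$ matrix $W$ with trace $1$ such that $P(x)=\langle \vec{x},W\vec{x}\rangle$ for every atom $x$ of $L(\mathbb{R}^3)$, where $\vec{x}$ is a unit vector along $x$. (ii) Every bounded frame function $f$ on the set of all atoms of $L(\mathbb{R}^3)$ which satisfies $f(e_i)=0$ for $1\le i\le 3$ and $f(b_{ij})=0$ for $1\le i<j\le 3$ is identically zero.
   Context: $L(\mathbb{R}^3)$ denotes the lattice of subspaces of $\mathbb{R}^3$ (with its standard inner product); its atoms are the one-dimensional subspaces (rays). For an atom $x$, $\vec{x}$ denotes a unit vector spanning $x$. A frame function on a set $\Gamma$ of atoms of $L(\mathbb{R}^3)$ is a real function $f$ on $\Gamma$ for which there is a constant $C$ such that $f(x)+f(x')+f(x'')=C$ for every triple $x,x',x''$ of pairwise orthogonal atoms in $\Gamma$. A state on $\mathbb{R}^3$ is a function $P$ from the atoms of $L(\mathbb{R}^3)$ to $[0,\infty)$ such that $P(x)+P(x')+P(x'')=1$ for every triple of pairwise orthogonal atoms. Let $\vec{e_1}=(1,0,0)$, $\vec{e_2}=(0,1,0)$, $\vec{e_3}=(0,0,1)$ and $\vec{b_{ij}}=\frac{1}{\sqrt{2}}(\vec{e_i}+\vec{e_j})$ for $1\le i<j\le 3$. Let $e_i$ and $b_{ij}$ denote the rays spanned by these vectors. *)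

theory Defs
  imports "HOL-Analysis.Analysis"
begin

definition atoms3 :: "(real^3) set set" where
  "atoms3 = {span {v} | v :: real^3. v \<noteq> 0}"

definition orth_sub :: "(real^3) set \<Rightarrow> (real^3) set \<Rightarrow> bool" where
  "orth_sub x y \<longleftrightarrow> (\<forall>u\<in>x. \<forall>w\<in>y. inner u w = 0)"

definition orth_triple :: "(real^3) set \<Rightarrow> (real^3) set \<Rightarrow> (real^3) set \<Rightarrow> bool" where
  "orth_triple x y z \<longleftrightarrow> x \<in> atoms3 \<and> y \<in> atoms3 \<and> z \<in> atoms3 \<and>
     orth_sub x y \<and> orth_sub x z \<and> orth_sub y z"

definition frame_function :: "(real^3) set set \<Rightarrow> ((real^3) set \<Rightarrow> real) \<Rightarrow> bool" where
  "frame_function \<Gamma> f \<longleftrightarrow> (\<exists>C. \<forall>x y z. x \<in> \<Gamma> \<and> y \<in> \<Gamma> \<and> z \<in> \<Gamma> \<and> orth_triple x y z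
        \<longrightarrow> f x + f y + f z = C)"

definition is_state :: "((real^3) set \<Rightarrow> real) \<Rightarrow> bool" where
  "is_state P \<longleftrightarrow> (\<forall>x\<in>atoms3. 0 \<le> P x) \<and>
     (\<forall>x y z. orth_triple x y z \<longrightarrow> P x + P y + P z = 1)"

definition e1 :: "real^3" where "e1 = vector [1, 0, 0]"
definition e2 :: "real^3" where "e2 = vector [0, 1, 0]"
definition e3 :: "real^3" where "e3 = vector [0, 0, 1]"
definition b12 :: "real^3" where "b12 = (1 / sqrt 2) *\<^sub>R (e1 + e2)"
definition b13 :: "real^3" where "b13 = (1 / sqrt 2) *\<^sub>R (e1 + e3)"
definition b23 :: "real^3" where "b23 = (1 / sqrt 2) *\<^sub>R (e2 + e3)"

definition gleason_R3 :: bool where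
  "gleason_R3 \<longleftrightarrow> (\<forall>P. is_state P \<longrightarrow>
     (\<exists>W :: real^3^3. transpose W = W \<and> (\<forall>v. 0 \<le> inner v (W *v v)) \<and> trace W = 1 \<and>
        (\<forall>x\<in>atoms3. \<forall>u. u \<in> x \<and> norm u = 1 \<longrightarrow> P x = inner u (W *v u))))"

definition frame_vanishing_R3 :: bool where
  "frame_vanishing_R3 \<longleftrightarrow> (\<forall>f. frame_function atoms3 f \<and>
     (\<exists>B. \<forall>x\<in>atoms3. \<bar>f x\<bar> \<le> B) \<and>
     f (span {e1}) = 0 \<and> f (span {e2}) = 0 \<and> f (span {e3}) = 0 \<and>
     f (span {b12}) = 0 \<and> f (span {b13}) = 0 \<and> f (span {b23}) = 0
     \<longrightarrow> (\<forall>x\<in>atoms3. f x = 0))"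

end

theory Submission
  imports Defs
begin

text \<open>For any 3x3 matrix A, the function sending a ray to <u, A u>, u a unit vector on it, is a
  bounded frame function with constant trace A. By polarization a quadratic form on R^3 is
  determined by its values at the six vectors e_i and b_ij, and every six values are attained by a
  symmetric matrix.

  (i) implies (ii): a bounded frame function f, shifted by a constant to become positive and then
  normalized, is a state. By Gleason, f is then a quadratic form plus a constant; vanishing at the
  six rays forces the form to be constant on the unit sphere, so f = 0.

  (ii) implies (i): for a state P take the symmetric W that agrees with P on the six rays. Then P
  minus the form of W is a bounded frame function vanishing on the six rays, hence zero, and the
  positivity and normalization of P make W positive semidefinite with trace 1.\<close>

definition qform :: "real^3^3 \<Rightarrow> real^3 \<Rightarrow> real" where
  "qform A u = inner u (A *v u)"

lemma qform_expand: "qform A u = (\<Sum>i\<in>UNIV. \<Sum>j\<in>UNIV. u$i * A$i$j * u$j)"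
  by (simp add: qform_def inner_vec_def matrix_vector_mult_def sum_distrib_left mult.assoc)

lemma qform_expand3:
  "qform A u = u$1^2 * A$1$1 + u$2^2 * A$2$2 + u$3^2 * A$3$3
     + u$1 * u$2 * (A$1$2 + A$2$1) + u$1 * u$3 * (A$1$3 + A$3$1) + u$2 * u$3 * (A$2$3 + A$3$2)"
  by (simp add: qform_expand sum_3 algebra_simps power2_eq_square)

lemma qform_scaleR: "qform A (c *\<^sub>R u) = c^2 * qform A u"
  by (simp add: qform_def matrix_vector_mult_scaleR power2_eq_square)

lemma qform_bounded: "\<exists>K. \<forall>u. \<bar>qform A u\<bar> \<le> K * (norm u)^2"
proof -
  obtain K where K: "\<And>u. norm (A *v u) \<le> K * norm u"
    using linear_bounded[OF matrix_vector_mul_linear] by blast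
  have "\<bar>qform A u\<bar> \<le> K * (norm u)^2" for u
  proof -
    have "\<bar>qform A u\<bar> \<le> norm u * norm (A *v u)"
      unfolding qform_def by (rule Cauchy_Schwarz_ineq2)
    also have "\<dots> \<le> norm u * (K * norm u)" by (intro mult_left_mono K) simp
    finally show ?thesis by (simp add: power2_eq_square mult_ac)
  qed
  then show ?thesis by blast
qed

lemma qform_orthonormal_sum:
  assumes "norm u1 = 1" "norm u2 = 1" "norm u3 = 1"
    and "inner u1 u2 = 0" "inner u1 u3 = 0" "inner u2 u3 = 0"
  shows "qform A u1 + qform A u2 + qform A u3 = trace A"
proof -
  define U :: "real^3^3" where "U = vector [u1, u2, u3]"
  have "U ** transpose U = mat 1"
  proof -
    have "(U ** transpose U)$k$l = inner (U$k) (U$l)" for k l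
      by (simp add: matrix_matrix_mult_def transpose_def inner_vec_def)
    then show ?thesis using assms
      by (simp add: vec_eq_iff forall_3 U_def mat_def inner_commute norm_eq_1)
  qed
  then have "transpose U ** U = mat 1" using matrix_left_right_inverse by blast
  then have columns: "(\<Sum>k\<in>UNIV. U$k$i * U$k$j) = (if i = j then 1 else 0)" for i j
  proof -
    have "(transpose U ** U)$i$j = (mat 1 :: real^3^3)$i$j"
      using \<open>transpose U ** U = mat 1\<close> by simp
    then show ?thesis by (simp add: matrix_matrix_mult_def transpose_def mat_def)
  qed
  have "qform A u1 + qform A u2 + qform A u3 = (\<Sum>k\<in>UNIV. qform A (U$k))"
    by (simp add: sum_3 U_def)
  also have "\<dots> = (\<Sum>k\<in>UNIV. \<Sum>i\<in>UNIV. \<Sum>j\<in>UNIV. A$i$j * (U$k$i * U$k$j))"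
    by (simp add: qform_expand mult_ac)
  also have "\<dots> = (\<Sum>i\<in>UNIV. \<Sum>k\<in>UNIV. \<Sum>j\<in>UNIV. A$i$j * (U$k$i * U$k$j))"
    by (rule sum.swap)
  also have "\<dots> = (\<Sum>i\<in>UNIV. \<Sum>j\<in>UNIV. \<Sum>k\<in>UNIV. A$i$j * (U$k$i * U$k$j))"
    by (rule sum.cong[OF refl], rule sum.swap)
  also have "\<dots> = (\<Sum>i\<in>UNIV. \<Sum>j\<in>UNIV. A$i$j * (\<Sum>k\<in>UNIV. U$k$i * U$k$j))"
    by (simp add: sum_distrib_left)
  also have "\<dots> = trace A"
    by (simp add: columns trace_def if_distrib sum.delta cong: if_cong)
  finally show ?thesis .
qed

definition frame_vectors :: "(real^3) set" where
  "frame_vectors = {e1, e2, e3, b12, b13, b23}"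

lemma norm_frame_vectors: "v \<in> frame_vectors \<Longrightarrow> norm v = 1"
  by (auto simp: frame_vectors_def norm_eq_sqrt_inner inner_vec_def sum_3
      b12_def b13_def b23_def e1_def e2_def e3_def)

lemma qform_frame_vectors:
  "qform A e1 = A$1$1" "qform A e2 = A$2$2" "qform A e3 = A$3$3"
  "qform A b12 = (A$1$1 + A$2$2 + A$1$2 + A$2$1) / 2"
  "qform A b13 = (A$1$1 + A$3$3 + A$1$3 + A$3$1) / 2"
  "qform A b23 = (A$2$2 + A$3$3 + A$2$3 + A$3$2) / 2"
  by (simp_all add: qform_expand3 b12_def b13_def b23_def e1_def e2_def e3_def
      power2_eq_square field_simps)

lemma qform_frame_expansion:
  "qform A u = u$1^2 * qform A e1 + u$2^2 * qform A e2 + u$3^2 * qform A e3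
     + u$1 * u$2 * (2 * qform A b12 - qform A e1 - qform A e2)
     + u$1 * u$3 * (2 * qform A b13 - qform A e1 - qform A e3)
     + u$2 * u$3 * (2 * qform A b23 - qform A e2 - qform A e3)"
  unfolding qform_frame_vectors qform_expand3[of A u] by (simp add: field_simps)

lemma qform_const_on_frame_vectors:
  assumes "\<forall>v\<in>frame_vectors. qform A v = t"
  shows "qform A u = t * (norm u)^2"
proof -
  have "(norm u)^2 = u$1^2 + u$2^2 + u$3^2"
    unfolding power2_norm_eq_inner by (simp add: inner_vec_def sum_3 power2_eq_square)
  moreover have "qform A e1 = t" "qform A e2 = t" "qform A e3 = t"
    "qform A b12 = t" "qform A b13 = t" "qform A b23 = t"
    using assms by (simp_all add: frame_vectors_def)
  ultimately show ?thesis
    using qform_frame_expansion[of A u] by (simp add: algebra_simps)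
qed

lemma symmetric_qform_with_frame_values:
  "\<exists>W. transpose W = W \<and> (\<forall>v\<in>frame_vectors. qform W v = g v)"
proof -
  define W :: "real^3^3" where "W = vector [
      vector [g e1, g b12 - (g e1 + g e2) / 2, g b13 - (g e1 + g e3) / 2],
      vector [g b12 - (g e1 + g e2) / 2, g e2, g b23 - (g e2 + g e3) / 2],
      vector [g b13 - (g e1 + g e3) / 2, g b23 - (g e2 + g e3) / 2, g e3]]"
  have "transpose W = W"
    by (simp add: W_def vec_eq_iff forall_3 transpose_def)
  moreover have "\<forall>v\<in>frame_vectors. qform W v = g v"
    by (simp add: frame_vectors_def qform_frame_vectors W_def)
  ultimately show ?thesis by blast
qed

lemma span_singleton_in_atoms3: "v \<noteq> 0 \<Longrightarrow> span {v} \<in> atoms3"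
  unfolding atoms3_def by auto

lemma atoms3_unit_span:
  assumes "x \<in> atoms3"
  obtains u where "x = span {u}" "norm u = 1"
proof -
  obtain v where v: "v \<noteq> 0" "x = span {v}"
    using assms unfolding atoms3_def by auto
  have "sgn v \<in> span {v}"
    by (simp add: sgn_div_norm span_mul span_base)
  moreover have "v = norm v *\<^sub>R sgn v"
    using v(1) by (simp add: sgn_div_norm)
  then have "v \<in> span {sgn v}"
    by (metis span_mul span_base singletonI)
  ultimately have "span {sgn v} = span {v}"
    by (simp add: span_eq)
  then show thesis
    using that[of "sgn v"] v by (simp add: norm_sgn)
qed

lemma unit_in_span_singleton:
  assumes "u \<in> span {v}" "norm u = 1" "norm v = 1"
  shows "u = v \<or> u = - v"
proof -
  obtain c where c: "u = c *\<^sub>R v"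
    using assms(1) unfolding span_singleton by auto
  then have "\<bar>c\<bar> = 1" using assms by simp
  then show ?thesis using c by (cases "c \<ge> 0") auto
qed

lemma orth_sub_span_singleton: "orth_sub (span {a}) (span {b}) \<longleftrightarrow> inner a b = 0"
  unfolding orth_sub_def span_singleton by auto

lemma orth_triple_unit_vectors:
  assumes "orth_triple x y z"
  obtains u1 u2 u3 where "x = span {u1}" "y = span {u2}" "z = span {u3}"
    "norm u1 = 1" "norm u2 = 1" "norm u3 = 1"
    "inner u1 u2 = 0" "inner u1 u3 = 0" "inner u2 u3 = 0"
proof -
  have "x \<in> atoms3" "y \<in> atoms3" "z \<in> atoms3"
    using assms by (simp_all add: orth_triple_def)
  then obtain u1 u2 u3 where "x = span {u1}" "y = span {u2}" "z = span {u3}"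
    "norm u1 = 1" "norm u2 = 1" "norm u3 = 1"
    by (meson atoms3_unit_span)
  with that assms show thesis
    unfolding orth_triple_def by (simp add: orth_sub_span_singleton)
qed

lemma orth_triple_through_atom:
  assumes "x \<in> atoms3"
  shows "\<exists>y z. orth_triple x y z"
proof -
  obtain v where v: "v \<noteq> 0" "x = span {v}"
    using assms unfolding atoms3_def by auto
  have "dim {v} < DIM(real^3)"
    using dim_le_card[of "{v}"] by simp
  then obtain w where w: "w \<noteq> 0" "\<And>y. y \<in> span {v} \<Longrightarrow> orthogonal w y"
    using orthogonal_to_subspace_exists by blast
  have "dim {v, w} \<le> card {v, w}" by (rule dim_le_card') simp
  also have "\<dots> < DIM(real^3)" by (cases "v = w") auto
  finally obtain z where z: "z \<noteq> 0" "\<And>y. y \<in> span {v, w} \<Longrightarrow> orthogonal z y"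
    using orthogonal_to_subspace_exists by blast
  have "inner v w = 0" "inner v z = 0" "inner w z = 0"
    using w(2)[of v] z(2)[of v] z(2)[of w]
    by (simp_all add: span_base orthogonal_def inner_commute)
  then have "orth_triple x (span {w}) (span {z})"
    unfolding orth_triple_def
    using v w z by (simp add: span_singleton_in_atoms3 orth_sub_span_singleton)
  then show ?thesis by blast
qed

lemma orth_triple_basis: "orth_triple (span {e1}) (span {e2}) (span {e3})"
proof -
  have "norm e1 = 1" "norm e2 = 1" "norm e3 = 1"
    by (simp_all add: norm_frame_vectors frame_vectors_def)
  then have "e1 \<noteq> 0" "e2 \<noteq> 0" "e3 \<noteq> 0" by auto
  moreover have "inner e1 e2 = 0" "inner e1 e3 = 0" "inner e2 e3 = 0"
    by (simp_all add: inner_vec_def sum_3 e1_def e2_def e3_def)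
  ultimately show ?thesis
    unfolding orth_triple_def by (simp add: span_singleton_in_atoms3 orth_sub_span_singleton)
qed

text \<open>A ray contains exactly two unit vectors \<open>\<plusminus>u\<close> and a quadratic form is even, so the
  choice made by SOME is irrelevant (\<open>atom_qform_eq\<close>).\<close>
definition atom_qform :: "real^3^3 \<Rightarrow> (real^3) set \<Rightarrow> real" where
  "atom_qform A x = qform A (SOME u. u \<in> x \<and> norm u = 1)"

lemma atom_qform_eq:
  assumes "x \<in> atoms3" "u \<in> x" "norm u = 1"
  shows "atom_qform A x = qform A u"
proof -
  obtain w where w: "x = span {w}" "norm w = 1"
    using assms(1) atoms3_unit_span by blast
  have unit_qform: "qform A u' = qform A w" if "u' \<in> x" "norm u' = 1" for u'
  proof -
    have "u' = w \<or> u' = - w"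
      using unit_in_span_singleton[of u' w] that w by simp
    moreover have "qform A (- w) = qform A w"
      using qform_scaleR[of A "-1" w] by simp
    ultimately show ?thesis by (elim disjE) simp_all
  qed
  have "(SOME u. u \<in> x \<and> norm u = 1) \<in> x \<and> norm (SOME u. u \<in> x \<and> norm u = 1) = 1"
    using someI_ex[of "\<lambda>u. u \<in> x \<and> norm u = 1"] assms by blast
  then have "atom_qform A x = qform A w"
    unfolding atom_qform_def using unit_qform by blast
  then show ?thesis
    using unit_qform[OF assms(2,3)] by simp
qed

lemma atom_qform_span:
  assumes "norm u = 1"
  shows "atom_qform A (span {u}) = qform A u"
proof -
  have "u \<noteq> 0" using assms by auto
  then show ?thesis
    using assms by (simp add: atom_qform_eq span_singleton_in_atoms3 span_base)
qed

lemma atom_qform_const_on_frame_vectors: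
  assumes "\<forall>v\<in>frame_vectors. qform A v = t" "x \<in> atoms3"
  shows "atom_qform A x = t"
proof -
  obtain u where "x = span {u}" "norm u = 1"
    using atoms3_unit_span[OF assms(2)] by blast
  then show ?thesis
    using qform_const_on_frame_vectors[OF assms(1), of u] by (simp add: atom_qform_span)
qed

lemma atom_qform_orth_triple:
  "orth_triple x y z \<Longrightarrow> atom_qform A x + atom_qform A y + atom_qform A z = trace A"
  by (elim orth_triple_unit_vectors) (simp add: atom_qform_span qform_orthonormal_sum)

lemma atom_qform_bounded: "\<exists>K. \<forall>x\<in>atoms3. \<bar>atom_qform A x\<bar> \<le> K"
proof -
  obtain K where K: "\<And>u. \<bar>qform A u\<bar> \<le> K * (norm u)^2"
    using qform_bounded by blast
  have "\<bar>atom_qform A x\<bar> \<le> K" if "x \<in> atoms3" for x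
  proof -
    obtain u where "x = span {u}" "norm u = 1"
      using atoms3_unit_span[OF \<open>x \<in> atoms3\<close>] by blast
    then show ?thesis using K[of u] by (simp add: atom_qform_span)
  qed
  then show ?thesis by blast
qed

lemma qform_nonneg_if_atom_qform_nonneg:
  assumes "\<forall>x\<in>atoms3. 0 \<le> atom_qform A x"
  shows "0 \<le> qform A v"
proof (cases "v = 0")
  case True
  then show ?thesis by (simp add: qform_def)
next
  case False
  then have "span {sgn v} \<in> atoms3" "norm (sgn v) = 1"
    by (simp_all add: span_singleton_in_atoms3 norm_sgn sgn_zero_iff)
  then have "0 \<le> qform A (sgn v)"
    using assms atom_qform_span[of "sgn v" A] by fastforce
  moreover have "qform A v = (norm v)^2 * qform A (sgn v)"
    using qform_scaleR[of A "norm v" "sgn v"] False by (simp add: sgn_div_norm)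
  ultimately show ?thesis by simp
qed

lemma represents_iff_atom_qform:
  "(\<forall>x\<in>atoms3. \<forall>u. u \<in> x \<and> norm u = 1 \<longrightarrow> P x = inner u (W *v u))
     \<longleftrightarrow> (\<forall>x\<in>atoms3. P x = atom_qform W x)"
proof
  assume rep: "\<forall>x\<in>atoms3. \<forall>u. u \<in> x \<and> norm u = 1 \<longrightarrow> P x = inner u (W *v u)"
  show "\<forall>x\<in>atoms3. P x = atom_qform W x"
  proof
    fix x assume x: "x \<in> atoms3"
    obtain u where "x = span {u}" "norm u = 1"
      using atoms3_unit_span[OF x] by blast
    then show "P x = atom_qform W x"
      using rep x by (simp add: atom_qform_span qform_def span_base)
  qed
next
  assume rep: "\<forall>x\<in>atoms3. P x = atom_qform W x"
  show "\<forall>x\<in>atoms3. \<forall>u. u \<in> x \<and> norm u = 1 \<longrightarrow> P x = inner u (W *v u)"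
  proof (intro ballI allI impI)
    fix x u assume "x \<in> atoms3" "u \<in> x \<and> norm u = 1"
    then show "P x = inner u (W *v u)"
      using rep atom_qform_eq[of x u W] by (simp add: qform_def)
  qed
qed

lemma frame_function_atoms3_iff:
  "frame_function atoms3 f \<longleftrightarrow> (\<exists>C. \<forall>x y z. orth_triple x y z \<longrightarrow> f x + f y + f z = C)"
proof -
  have "(x \<in> atoms3 \<and> y \<in> atoms3 \<and> z \<in> atoms3 \<and> orth_triple x y z) \<longleftrightarrow> orth_triple x y z"
    for x y z by (auto simp: orth_triple_def)
  then show ?thesis
    unfolding frame_function_def by simp
qed

lemma frame_function_const: "frame_function \<Gamma> (\<lambda>_. c)"
  unfolding frame_function_def by blast

lemma frame_function_add:
  assumes "frame_function \<Gamma> f" "frame_function \<Gamma> g"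
  shows "frame_function \<Gamma> (\<lambda>x. f x + g x)"
proof -
  obtain C D where
    C: "\<forall>x y z. x \<in> \<Gamma> \<and> y \<in> \<Gamma> \<and> z \<in> \<Gamma> \<and> orth_triple x y z \<longrightarrow> f x + f y + f z = C" and
    D: "\<forall>x y z. x \<in> \<Gamma> \<and> y \<in> \<Gamma> \<and> z \<in> \<Gamma> \<and> orth_triple x y z \<longrightarrow> g x + g y + g z = D"
    using assms unfolding frame_function_def by blast
  show ?thesis
    unfolding frame_function_def
  proof (intro exI[of _ "C + D"] allI impI)
    fix x y z assume "x \<in> \<Gamma> \<and> y \<in> \<Gamma> \<and> z \<in> \<Gamma> \<and> orth_triple x y z"
    then show "f x + g x + (f y + g y) + (f z + g z) = C + D"
      using C D by fastforce
  qed
qed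

lemma frame_function_diff:
  assumes "frame_function \<Gamma> f" "frame_function \<Gamma> g"
  shows "frame_function \<Gamma> (\<lambda>x. f x - g x)"
proof -
  obtain C D where
    C: "\<forall>x y z. x \<in> \<Gamma> \<and> y \<in> \<Gamma> \<and> z \<in> \<Gamma> \<and> orth_triple x y z \<longrightarrow> f x + f y + f z = C" and
    D: "\<forall>x y z. x \<in> \<Gamma> \<and> y \<in> \<Gamma> \<and> z \<in> \<Gamma> \<and> orth_triple x y z \<longrightarrow> g x + g y + g z = D"
    using assms unfolding frame_function_def by blast
  show ?thesis
    unfolding frame_function_def
  proof (intro exI[of _ "C - D"] allI impI)
    fix x y z assume "x \<in> \<Gamma> \<and> y \<in> \<Gamma> \<and> z \<in> \<Gamma> \<and> orth_triple x y z"
    then show "f x - g x + (f y - g y) + (f z - g z) = C - D"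
      using C D by fastforce
  qed
qed

lemma is_state_frame_function: "is_state P \<Longrightarrow> frame_function \<Gamma> P"
  unfolding is_state_def frame_function_def by blast

lemma frame_function_atom_qform: "frame_function \<Gamma> (atom_qform A)"
  unfolding frame_function_def using atom_qform_orth_triple by blast

lemma is_state_abs_le_1:
  assumes "is_state P" "x \<in> atoms3"
  shows "\<bar>P x\<bar> \<le> 1"
proof -
  obtain y z where "orth_triple x y z"
    using orth_triple_through_atom[OF assms(2)] by blast
  then have "P x + P y + P z = 1" "0 \<le> P x" "0 \<le> P y" "0 \<le> P z"
    using assms(1) unfolding is_state_def orth_triple_def by blast+
  then show ?thesis by linarith
qed

lemma trace_eq_1_if_represents_state:
  assumes "is_state P" "\<forall>x\<in>atoms3. P x = atom_qform W x"
  shows "trace W = 1"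
proof -
  have "span {e1} \<in> atoms3" "span {e2} \<in> atoms3" "span {e3} \<in> atoms3"
    using orth_triple_basis by (simp_all add: orth_triple_def)
  moreover have "P (span {e1}) + P (span {e2}) + P (span {e3}) = 1"
    using assms(1) orth_triple_basis unfolding is_state_def by blast
  ultimately show ?thesis
    using assms(2) atom_qform_orth_triple[OF orth_triple_basis, of W] by simp
qed

lemma is_state_normalized_frame_function:
  assumes "frame_function atoms3 g" "\<forall>x\<in>atoms3. 0 < g x"
  obtains c where "c > 0" "is_state (\<lambda>x. g x / c)"
proof -
  obtain c where c: "\<And>x y z. orth_triple x y z \<Longrightarrow> g x + g y + g z = c"
    using assms(1) unfolding frame_function_atoms3_iff by blast
  have "span {e1} \<in> atoms3" "span {e2} \<in> atoms3" "span {e3} \<in> atoms3"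
    using orth_triple_basis by (simp_all add: orth_triple_def)
  then have "c > 0"
    using c[OF orth_triple_basis] assms(2) by (metis add_pos_pos)
  moreover have "is_state (\<lambda>x. g x / c)"
    unfolding is_state_def using \<open>c > 0\<close> assms(2) c
    by (simp add: add_divide_distrib[symmetric] less_imp_le)
  ultimately show thesis using that by blast
qed

lemma gleason_imp_frame_vanishing:
  assumes gleason_R3
  shows frame_vanishing_R3
  unfolding frame_vanishing_R3_def
proof (intro allI impI)
  fix f
  assume f: "frame_function atoms3 f \<and> (\<exists>B. \<forall>x\<in>atoms3. \<bar>f x\<bar> \<le> B) \<and>
     f (span {e1}) = 0 \<and> f (span {e2}) = 0 \<and> f (span {e3}) = 0 \<and>
     f (span {b12}) = 0 \<and> f (span {b13}) = 0 \<and> f (span {b23}) = 0"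
  then obtain B where B: "\<forall>x\<in>atoms3. \<bar>f x\<bar> < B"
    by (meson gt_ex le_less_trans)
  have "frame_function atoms3 (\<lambda>x. f x + B)"
    using f frame_function_add frame_function_const by blast
  moreover have "\<forall>x\<in>atoms3. 0 < f x + B"
    using B by (fastforce simp: abs_less_iff)
  ultimately obtain c where "c > 0" and "is_state (\<lambda>x. (f x + B) / c)"
    by (rule is_state_normalized_frame_function)
  then obtain W where W: "\<forall>x\<in>atoms3. (f x + B) / c = atom_qform W x"
    using assms unfolding gleason_R3_def represents_iff_atom_qform by blast
  have "\<forall>v\<in>frame_vectors. qform W v = B / c"
  proof
    fix v assume v: "v \<in> frame_vectors"
    then have "span {v} \<in> atoms3" "atom_qform W (span {v}) = qform W v"
      using norm_frame_vectors[OF v] by (auto intro: span_singleton_in_atoms3 atom_qform_span)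
    moreover have "f (span {v}) = 0"
      using v f by (auto simp: frame_vectors_def)
    ultimately show "qform W v = B / c"
      using W by force
  qed
  then have "atom_qform W x = B / c" if "x \<in> atoms3" for x
    using that by (rule atom_qform_const_on_frame_vectors)
  then show "\<forall>x\<in>atoms3. f x = 0"
    using W \<open>c > 0\<close> by simp
qed

lemma frame_vanishing_imp_gleason:
  assumes frame_vanishing_R3
  shows gleason_R3
  unfolding gleason_R3_def represents_iff_atom_qform
proof (intro allI impI)
  fix P assume P: "is_state P"
  obtain W where "transpose W = W" and W: "\<forall>v\<in>frame_vectors. qform W v = P (span {v})"
    using symmetric_qform_with_frame_values[of "\<lambda>v. P (span {v})"] by blast
  define f where "f x = P x - atom_qform W x" for x
  have "frame_function atoms3 f"
    unfolding f_def
    by (intro frame_function_diff is_state_frame_function[OF P] frame_function_atom_qform)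
  moreover have "\<exists>K. \<forall>x\<in>atoms3. \<bar>f x\<bar> \<le> K"
  proof -
    obtain K where K: "\<forall>x\<in>atoms3. \<bar>atom_qform W x\<bar> \<le> K"
      using atom_qform_bounded by blast
    have "\<bar>f x\<bar> \<le> 1 + K" if "x \<in> atoms3" for x
      using is_state_abs_le_1[OF P that] K[rule_format, OF that]
        abs_triangle_ineq4[of "P x" "atom_qform W x"]
      unfolding f_def by linarith
    then show ?thesis by blast
  qed
  moreover have "f (span {v}) = 0" if "v \<in> frame_vectors" for v
    using W that atom_qform_span[OF norm_frame_vectors[OF that], of W] unfolding f_def by simp
  then have "f (span {e1}) = 0 \<and> f (span {e2}) = 0 \<and> f (span {e3}) = 0 \<and>
     f (span {b12}) = 0 \<and> f (span {b13}) = 0 \<and> f (span {b23}) = 0"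
    by (simp add: frame_vectors_def)
  ultimately have "\<forall>x\<in>atoms3. f x = 0"
    using assms unfolding frame_vanishing_R3_def by blast
  then have rep: "\<forall>x\<in>atoms3. P x = atom_qform W x"
    by (simp add: f_def)
  have "\<forall>v. 0 \<le> inner v (W *v v)"
    using P rep qform_nonneg_if_atom_qform_nonneg[of W] unfolding is_state_def qform_def by simp
  moreover have "trace W = 1"
    using P rep by (rule trace_eq_1_if_represents_state)
  ultimately show "\<exists>W :: real^3^3. transpose W = W \<and> (\<forall>v. 0 \<le> inner v (W *v v)) \<and>
      trace W = 1 \<and> (\<forall>x\<in>atoms3. P x = atom_qform W x)"
    using \<open>transpose W = W\<close> rep by blast
qed

theorem mainTheorem1:
  shows "gleason_R3 \<longleftrightarrow> frame_vanishing_R3"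
  using gleason_imp_frame_vanishing frame_vanishing_imp_gleason by blast

end
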